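(* For every integer $K\ge 3$ there exist a positive integer $M(K)$ and points $x_1,\dots,x_{M(K)}\in(0,1)$ such that $\{x_i\}_{i=1}^{M(K)}$ is a set of uniqueness for $\mathscr{G}_K$; that is, whenever $F,G\in\mathscr{G}_K$ satisfy $F(x_i)=G(x_i)$ for all $i$, then $F=G$. Moreover $M(K)=O(K^3)$ as $K\to\infty$.
   Context: A Cantor set is specified by an integer scale factor $N\ge 3$ and a digit set $D\subset\{0,1,\dots,N-1\}$ with $2\le |D|\le N-1$; equivalently by its binary digit vector $\vec B=(b_0,\dots,b_{N-1})\in\{0,1\}^N$ with $b_i=1$ iff $i\in D$, and $\|\vec B\|:=\sum_i b_i=|D|$. With $\phi_d(x)=(x+d)/N$ for $d\in D$, the Cantor set $C_{\vec B}\subset[0,1]$ is the unique nonempty compact set with $C_{\vec B}=\bigcup_{d\in D}\phi_d(C_{\vec B})$, and $\mu_{\vec B}$ is the unique Borel probability measure with $\mu_{\vec B}=\frac{1}{\|\vec B\|}\sum_{d\in D}\mu_{\vec B}\circ\phi_d^{-1}$ (it is supported on $C_{\vec B}$). The CDF of the Cantor set is $F_{\vec B}(x)=\mu_{\vec B}([0,x])$ for $x\in[0,1]$. For $K\ge 3$, $\mathscr{G}_K$ denotes the set of all functions $F_{\vec B}$ where $\vec B$ ranges over all such binary digit vectors with scale factor (length) $N\le K$ (different vectors may give the same function). *)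

theory Defs
  imports "HOL-Probability.Probability" "HOL-Library.Landau_Symbols"
begin

text \<open>Admissible data: scale factor N \<ge> 3, digit set D \<subseteq> {0..N-1} with 2 \<le> |D| \<le> N-1.
  (Equivalent to a binary digit vector of length N.)\<close>
definition valid_digits :: "nat \<Rightarrow> nat set \<Rightarrow> bool" where
  "valid_digits N D \<longleftrightarrow> 3 \<le> N \<and> D \<subseteq> {0..<N} \<and> 2 \<le> card D \<and> card D \<le> N - 1"

definition cphi :: "nat \<Rightarrow> nat \<Rightarrow> real \<Rightarrow> real" where
  "cphi N d x = (x + real d) / real N"

definition cantor_measure :: "nat \<Rightarrow> nat set \<Rightarrow> real measure" where
  "cantor_measure N D = (THE \<mu>. sets \<mu> = sets borel \<and> prob_space \<mu> \<and>
     (\<forall>A \<in> sets borel. emeasure \<mu> A =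
        (\<Sum>d\<in>D. emeasure \<mu> (cphi N d -` A)) / ennreal (real (card D))))"

definition cantor_cdf :: "nat \<Rightarrow> nat set \<Rightarrow> real \<Rightarrow> real" where
  "cantor_cdf N D x = measure (cantor_measure N D) {0..x}"

definition cantor_class :: "nat \<Rightarrow> (real \<Rightarrow> real) set" where
  "cantor_class K = {cantor_cdf N D | N D. valid_digits N D \<and> N \<le> K}"

end

(*
  A Cantor CDF F_{N,D} is the unique nondecreasing fixed point, equal to 0 on (-oo, 0] and to 1
  on [1, oo), of the averaging operator T_{N,D} G y = (1/|D|) * sum_{d in D} G (N y - d), which
  contracts the sup distance by 1/|D|; iterating the equation shows that F_{N,D} increases by at
  most |D|^-k over any interval of length N^-k. The measure of the definition is identified
  through its CDF: the measure with CDF F_{N,D} is self-similar, and the CDF of every self-similar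
  probability measure is a fixed point of T_{N,D}.

  Let F = F_{N,D} and G = F_{M,E} with N, M <= K agree at the fractions j/n, n <= K, and on the
  grid of step K^-3. Agreement at the multiples of 1/M and 1/N shows that at k/(NM) both take the
  value c/(|D| |E|), where c counts the composed digits M d + e (for F), resp. N e + d (for G),
  below k. Agreement on the K^-3 grid and the increment bound for k = 3 put F and G within
  min(|D|^-3, |E|^-3) < 1/(|D| |E|) of each other, so the counts agree and the two composed digit
  sets coincide. Then T_{N,D} and T_{M,E} commute, T_{N,D} G is a fixed point of T_{M,E}, hence
  equal to G, and G = F by uniqueness. The (K+1)^2 + K^3 sample points are O(K^3).
*)
theory Submission
  imports Defs
begin

(* The self-similarity equation of the measure read on the half-lines {..y}, since
   cphi N d -` {..y} = {..N y - d}. *)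
definition self_similar_op :: "nat \<Rightarrow> nat set \<Rightarrow> (real \<Rightarrow> real) \<Rightarrow> real \<Rightarrow> real" where
  "self_similar_op N D G y = (\<Sum>d\<in>D. G (real N * y - real d)) / real (card D)"

definition unit_interval_cdf :: "(real \<Rightarrow> real) \<Rightarrow> bool" where
  "unit_interval_cdf H \<longleftrightarrow> mono H \<and> (\<forall>y\<le>0. H y = 0) \<and> (\<forall>y\<ge>1. H y = 1)"

definition cantor_function :: "nat \<Rightarrow> nat set \<Rightarrow> (real \<Rightarrow> real) \<Rightarrow> bool" where
  "cantor_function N D H \<longleftrightarrow> unit_interval_cdf H \<and> self_similar_op N D H = H"

definition digits_below :: "nat set \<Rightarrow> nat \<Rightarrow> nat" where
  "digits_below D d = card {e\<in>D. e < d}"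

section \<open>Cantor functions as fixed points\<close>

lemma valid_digitsD:
  assumes "valid_digits N D"
  shows "3 \<le> N" "finite D" "2 \<le> real (card D)" "\<And>d. d \<in> D \<Longrightarrow> d < N"
  using assms unfolding valid_digits_def by (auto intro: finite_subset)

lemma unit_interval_cdfD:
  assumes "unit_interval_cdf H"
  shows "mono H" "y \<le> 0 \<Longrightarrow> H y = 0" "1 \<le> y \<Longrightarrow> H y = 1"
  using assms unfolding unit_interval_cdf_def by auto

lemma unit_interval_cdf_bounds:
  assumes "unit_interval_cdf H"
  shows "0 \<le> H y" "H y \<le> 1"
proof -
  have "H (min y 0) \<le> H y" "H y \<le> H (max y 1)"
    using unit_interval_cdfD(1)[OF assms] by (simp_all add: monoD)
  then show "0 \<le> H y" "H y \<le> 1"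
    using unit_interval_cdfD(2,3)[OF assms] by simp_all
qed

lemma cantor_functionD:
  assumes "cantor_function N D H"
  shows "unit_interval_cdf H" "H y = (\<Sum>d\<in>D. H (real N * y - real d)) / real (card D)"
  using assms unfolding cantor_function_def self_similar_op_def by metis+

lemma abs_sum_le_if_unique_nonzero:
  fixes f :: "'a \<Rightarrow> real"
  assumes "finite A" "\<And>a b. a \<in> A \<Longrightarrow> b \<in> A \<Longrightarrow> f a \<noteq> 0 \<Longrightarrow> f b \<noteq> 0 \<Longrightarrow> a = b"
    and "\<And>a. a \<in> A \<Longrightarrow> \<bar>f a\<bar> \<le> c" "0 \<le> c"
  shows "\<bar>sum f A\<bar> \<le> c"
proof (cases "\<exists>a\<in>A. f a \<noteq> 0")
  case True
  then obtain a where a: "a \<in> A" "f a \<noteq> 0" by blast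
  have "sum f A = f a + sum f (A - {a})"
    using assms(1) a(1) by (simp add: sum.remove)
  also have "sum f (A - {a}) = 0"
    by (rule sum.neutral) (use assms(2) a in blast)
  finally show ?thesis using assms(3)[OF a(1)] by simp
next
  case False
  then show ?thesis using assms(4) by (simp add: sum.neutral)
qed

lemma abs_sum_shifts_le:
  fixes g :: "real \<Rightarrow> real" and D :: "nat set"
  assumes "finite D" and "\<And>z. z \<le> 0 \<or> 1 \<le> z \<Longrightarrow> g z = 0" and "\<And>z. \<bar>g z\<bar> \<le> c"
  shows "\<bar>\<Sum>d\<in>D. g (x - real d)\<bar> \<le> c"
proof (rule abs_sum_le_if_unique_nonzero)
  fix a b assume "a \<in> D" "b \<in> D" "g (x - real a) \<noteq> 0" "g (x - real b) \<noteq> 0"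
  then have "0 < x - real a" "x - real a < 1" "0 < x - real b" "x - real b < 1"
    using assms(2) by (meson not_le)+
  then show "a = b" by linarith
next
  show "0 \<le> c" using assms(3)[of 0] by linarith
qed (use assms in auto)

lemma self_similar_op_dist_le:
  assumes "valid_digits N D"
    and "\<And>z. z \<le> 0 \<or> 1 \<le> z \<Longrightarrow> G1 z = G2 z" and "\<And>z. \<bar>G1 z - G2 z\<bar> \<le> c"
  shows "\<bar>self_similar_op N D G1 y - self_similar_op N D G2 y\<bar> \<le> c / real (card D)"
proof -
  have "\<bar>\<Sum>d\<in>D. G1 (real N * y - real d) - G2 (real N * y - real d)\<bar> \<le> c"
    by (rule abs_sum_shifts_le) (use valid_digitsD(2)[OF assms(1)] assms(2,3) in auto)
  then show ?thesis
    using valid_digitsD(3)[OF assms(1)]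
    by (simp add: self_similar_op_def sum_subtractf abs_divide divide_right_mono
        flip: diff_divide_distrib)
qed

lemma unit_interval_cdf_self_similar_op:
  assumes v: "valid_digits N D" and G: "unit_interval_cdf G"
  shows "unit_interval_cdf (self_similar_op N D G)"
  unfolding unit_interval_cdf_def
proof (intro conjI allI impI monoI)
  have r: "2 \<le> real (card D)" using valid_digitsD(3)[OF v] .
  fix y :: real
  show "self_similar_op N D G y = 0" if "y \<le> 0"
  proof -
    have "real N * y \<le> 0" using that by (simp add: mult_nonneg_nonpos)
    then have "G (real N * y - real d) = 0" for d
      by (intro unit_interval_cdfD(2)[OF G]) linarith
    then show ?thesis by (simp add: self_similar_op_def)
  qed
  show "self_similar_op N D G y = 1" if "1 \<le> y"
  proof -
    have "G (real N * y - real d) = 1" if "d \<in> D" for d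
    proof (rule unit_interval_cdfD(3)[OF G])
      have "real N * 1 \<le> real N * y" using \<open>1 \<le> y\<close> by (intro mult_left_mono) auto
      moreover have "real d + 1 \<le> real N" using valid_digitsD(4)[OF v that] by linarith
      ultimately show "1 \<le> real N * y - real d" by linarith
    qed
    then show ?thesis using r by (simp add: self_similar_op_def)
  qed
next
  fix x y :: real assume "x \<le> y"
  then have "G (real N * x - real d) \<le> G (real N * y - real d)" for d
    by (intro monoD[OF unit_interval_cdfD(1)[OF G]]) (simp add: mult_left_mono)
  then show "self_similar_op N D G x \<le> self_similar_op N D G y"
    unfolding self_similar_op_def using valid_digitsD(3)[OF v]
    by (intro divide_right_mono sum_mono) auto
qed

lemma unit_interval_cdf_self_similar_op_iterate:
  assumes "valid_digits N D" "unit_interval_cdf G"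
  shows "unit_interval_cdf ((self_similar_op N D ^^ k) G)"
  by (induction k) (simp_all add: assms unit_interval_cdf_self_similar_op)

lemma self_similar_op_iterate_dist_le:
  assumes v: "valid_digits N D" and G: "unit_interval_cdf G1" "unit_interval_cdf G2"
  shows "\<bar>(self_similar_op N D ^^ k) G1 y - (self_similar_op N D ^^ k) G2 y\<bar>
    \<le> (1 / real (card D)) ^ k"
proof (induction k arbitrary: y)
  case 0
  show ?case using unit_interval_cdf_bounds[OF G(1), of y] unit_interval_cdf_bounds[OF G(2), of y]
    by simp
next
  case (Suc k)
  let ?G1 = "(self_similar_op N D ^^ k) G1" and ?G2 = "(self_similar_op N D ^^ k) G2"
  have "?G1 z = ?G2 z" if "z \<le> 0 \<or> 1 \<le> z" for z
    using that unit_interval_cdfD(2,3)[OF unit_interval_cdf_self_similar_op_iterate[OF v G(1)]]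
      unit_interval_cdfD(2,3)[OF unit_interval_cdf_self_similar_op_iterate[OF v G(2)]]
    by auto
  from self_similar_op_dist_le[OF v this Suc.IH]
  show ?case by (simp add: field_simps)
qed

lemma cantor_function_unique:
  assumes v: "valid_digits N D" and H: "cantor_function N D H1" "cantor_function N D H2"
  shows "H1 = H2"
proof
  fix y
  have fixed: "(self_similar_op N D ^^ k) H = H" if "cantor_function N D H" for H k
    using that by (induction k) (simp_all add: cantor_function_def)
  have "\<bar>H1 y - H2 y\<bar> \<le> (1 / real (card D)) ^ k" for k
    using self_similar_op_iterate_dist_le[OF v cantor_functionD(1)[OF H(1)]
        cantor_functionD(1)[OF H(2)], of k y]
    by (simp add: fixed H)
  moreover have "(\<lambda>k. (1 / real (card D)) ^ k) \<longlonglongrightarrow> 0"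
    using valid_digitsD(3)[OF v] by (intro LIMSEQ_power_zero) simp
  ultimately have "\<bar>H1 y - H2 y\<bar> \<le> 0"
    by (intro LIMSEQ_le_const[of "\<lambda>k. (1 / real (card D)) ^ k" 0]) auto
  then show "H1 y = H2 y" by simp
qed

lemma unit_interval_cdf_limit:
  assumes "\<And>n. unit_interval_cdf (f n)" and lim: "\<And>y. (\<lambda>n. f n y) \<longlonglongrightarrow> H y"
  shows "unit_interval_cdf H"
  unfolding unit_interval_cdf_def
proof (intro conjI allI impI monoI)
  fix x y :: real
  show "H x \<le> H y" if "x \<le> y"
    using that assms(1) by (intro LIMSEQ_le[OF lim lim]) (auto dest: unit_interval_cdfD(1) monoD)
  show "H y = 0" if "y \<le> 0"
  proof -
    have "(\<lambda>n. f n y) = (\<lambda>n. 0)" using that assms(1) by (simp add: unit_interval_cdfD(2))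
    then show ?thesis by (metis LIMSEQ_unique lim tendsto_const)
  qed
  show "H y = 1" if "1 \<le> y"
  proof -
    have "(\<lambda>n. f n y) = (\<lambda>n. 1)" using that assms(1) by (simp add: unit_interval_cdfD(3))
    then show ?thesis by (metis LIMSEQ_unique lim tendsto_const)
  qed
qed

lemma cantor_function_exists:
  assumes v: "valid_digits N D"
  obtains H where "cantor_function N D H"
proof -
  let ?T = "self_similar_op N D"
  define f where "f n = (?T ^^ n) (\<lambda>y. max 0 (min 1 y))" for n
  have f0: "unit_interval_cdf (f 0)"
    by (auto simp: f_def unit_interval_cdf_def mono_def)
  have f: "unit_interval_cdf (f n)" for n
    unfolding f_def using unit_interval_cdf_self_similar_op_iterate[OF v f0] by (simp add: f_def)
  have "convergent (\<lambda>n. f n y)" for y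
  proof -
    have "\<bar>f (Suc n) y - f n y\<bar> \<le> (1 / real (card D)) ^ n" for n
      using self_similar_op_iterate_dist_le[OF v unit_interval_cdf_self_similar_op[OF v f0] f0,
          of n y]
      by (simp only: f_def funpow_Suc_right funpow_0 comp_apply)
    then have "summable (\<lambda>n. f (Suc n) y - f n y)"
      using valid_digitsD(3)[OF v] by (intro summable_comparison_test[OF _ summable_geometric]) auto
    then have "convergent (\<lambda>n. f n y - f 0 y)"
      by (simp add: summable_iff_convergent sum_lessThan_telescope[of "\<lambda>i. f i y"])
    then show ?thesis by (simp add: convergent_diff_const_right_iff)
  qed
  then obtain H where lim: "\<And>y. (\<lambda>n. f n y) \<longlonglongrightarrow> H y"
    unfolding convergent_def by metis
  have "(\<lambda>n. f (Suc n) y) \<longlonglongrightarrow> ?T H y" for y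
  proof -
    have "f (Suc n) y = (\<Sum>d\<in>D. f n (real N * y - real d)) / real (card D)" for n
      by (simp add: f_def self_similar_op_def)
    moreover have "(\<lambda>n. (\<Sum>d\<in>D. f n (real N * y - real d)) / real (card D)) \<longlonglongrightarrow> ?T H y"
      unfolding self_similar_op_def using valid_digitsD(3)[OF v] by (intro tendsto_intros lim) auto
    ultimately show ?thesis by simp
  qed
  then have "?T H = H"
    using LIMSEQ_unique LIMSEQ_Suc[OF lim] by blast
  with unit_interval_cdf_limit[OF f lim] show ?thesis
    by (intro that) (simp add: cantor_function_def)
qed

section \<open>Local structure of Cantor functions\<close>

lemma cantor_function_digit_cell:
  assumes v: "valid_digits N D" and H: "cantor_function N D H"
    and d: "d < N" and t: "0 \<le> t" "t \<le> 1"
  shows "H ((real d + t) / real N) =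
    (real (digits_below D d) + (if d \<in> D then H t else 0)) / real (card D)"
proof -
  have N: "0 < real N" using valid_digitsD(1)[OF v] by simp
  have shift: "H (real N * ((real d + t) / real N) - real e) =
      (if e < d then 1 else 0) + (if e = d then H t else 0)" for e
  proof -
    have eq: "real N * ((real d + t) / real N) - real e = real d - real e + t" using N by simp
    consider "e < d" | "e = d" | "d < e" by linarith
    then show ?thesis
    proof cases
      case 1
      then have "1 \<le> real d - real e + t" using t by linarith
      then show ?thesis
        unfolding eq using 1 by (simp add: unit_interval_cdfD(3)[OF cantor_functionD(1)[OF H]])
    next
      case 3
      then have "real d - real e + t \<le> 0" using t by linarith
      then show ?thesis
        unfolding eq using 3 by (simp add: unit_interval_cdfD(2)[OF cantor_functionD(1)[OF H]])
    qed (unfold eq, simp)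
  qed
  have "H ((real d + t) / real N) =
      (\<Sum>e\<in>D. (if e < d then 1 else 0) + (if e = d then H t else 0)) / real (card D)"
    by (subst cantor_functionD(2)[OF H]) (simp only: shift)
  also have "\<dots> = (real (digits_below D d) + (if d \<in> D then H t else 0)) / real (card D)"
    using valid_digitsD(2)[OF v]
    by (simp add: sum.distrib digits_below_def flip: sum.inter_filter)
  finally show ?thesis .
qed

lemma cantor_function_at_grid:
  assumes v: "valid_digits N D" and H: "cantor_function N D H" and "e \<le> N"
  shows "H (real e / real N) = real (digits_below D e) / real (card D)"
proof (cases "e < N")
  case True
  then show ?thesis
    using cantor_function_digit_cell[OF v H True, of 0]
      unit_interval_cdfD(2)[OF cantor_functionD(1)[OF H], of 0]
    by simp
next
  case False
  then have "e = N" using assms(3) by simp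
  moreover have "{d\<in>D. d < N} = D" using valid_digitsD(4)[OF v] by auto
  ultimately show ?thesis
    using valid_digitsD(1,3)[OF v] unit_interval_cdfD(3)[OF cantor_functionD(1)[OF H], of 1]
    by (simp add: digits_below_def)
qed

lemma unit_interval_cdf_int_shift:
  fixes j :: int
  assumes H: "unit_interval_cdf H"
  shows "\<exists>c. 0 \<le> c \<and> c \<le> 1 \<and> (c \<noteq> 0 \<longrightarrow> 0 \<le> j \<and> j < 1) \<and>
    (\<forall>t\<in>{0..1}. H (of_int j + t) = H (of_int j) + c * H t)"
proof -
  consider "j < 0" | "j = 0" | "0 < j" by linarith
  then show ?thesis
  proof cases
    case 1
    then have "of_int j + t \<le> 0" if "t \<le> 1" for t :: real using that by linarith
    then show ?thesis using 1 by (intro exI[of _ 0]) (simp add: unit_interval_cdfD(2)[OF H])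
  next
    case 3
    then have "1 \<le> of_int j + t" if "0 \<le> t" for t :: real using that by linarith
    then show ?thesis using 3 by (intro exI[of _ 0]) (simp add: unit_interval_cdfD(3)[OF H])
  qed (intro exI[of _ 1], simp add: unit_interval_cdfD(2)[OF H])
qed

lemma leading_digit_bounds:
  fixes j m :: int
  assumes "0 \<le> j - int e * m" "j - int e * m < m" "e < N"
  shows "0 \<le> j \<and> j < int N * m"
proof -
  have "0 \<le> int e * m" using assms(1,2) by simp
  moreover have "(int e + 1) * m \<le> int N * m" using assms by (intro mult_right_mono) auto
  then have "int e * m + m \<le> int N * m" by (simp add: algebra_simps)
  ultimately show ?thesis using assms(1,2) by (intro conjI; linarith)
qed

lemma cantor_function_cell_affine:
  fixes j :: int
  assumes v: "valid_digits N D" and H: "cantor_function N D H"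
  shows "\<exists>c. 0 \<le> c \<and> c \<le> (1 / real (card D)) ^ k \<and> (c \<noteq> 0 \<longrightarrow> 0 \<le> j \<and> j < int N ^ k) \<and>
    (\<forall>t\<in>{0..1}. H ((of_int j + t) / real N ^ k) = H (of_int j / real N ^ k) + c * H t)"
proof (induction k arbitrary: j)
  case 0
  show ?case using unit_interval_cdf_int_shift[OF cantor_functionD(1)[OF H], of j] by simp
next
  case (Suc k)
  let ?r = "real (card D)" and ?m = "int N ^ k"
  let ?j = "\<lambda>e. j - int e * ?m"
  have "\<forall>e. \<exists>c. 0 \<le> c \<and> c \<le> (1 / ?r) ^ k \<and> (c \<noteq> 0 \<longrightarrow> 0 \<le> ?j e \<and> ?j e < ?m) \<and>
      (\<forall>t\<in>{0..1}. H ((of_int (?j e) + t) / real N ^ k) = H (of_int (?j e) / real N ^ k) + c * H t)"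
    using Suc.IH by blast
  then obtain c where c: "\<And>e. 0 \<le> c e" "\<And>e. c e \<le> (1 / ?r) ^ k"
      "\<And>e. c e \<noteq> 0 \<Longrightarrow> 0 \<le> ?j e \<and> ?j e < ?m"
      "\<And>e t. t \<in> {0..1} \<Longrightarrow>
        H ((of_int (?j e) + t) / real N ^ k) = H (of_int (?j e) / real N ^ k) + c e * H t"
    by metis
  have N: "3 \<le> N" and r: "2 \<le> ?r" using valid_digitsD[OF v] by auto
  have rescale: "real N * ((of_int j + t) / real N ^ Suc k) - real e =
      (of_int (?j e) + t) / real N ^ k" for t e
    using N by (simp add: field_simps)
  have index: "j div ?m = int e" if "c e \<noteq> 0" for e
    using c(3)[OF that] by (intro int_div_pos_eq[where r = "?j e"]) (simp_all add: algebra_simps)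
  define C where "C = (\<Sum>e\<in>D. c e) / ?r"
  have "\<bar>\<Sum>e\<in>D. c e\<bar> \<le> (1 / ?r) ^ k"
  proof (rule abs_sum_le_if_unique_nonzero)
    fix a b assume "a \<in> D" "b \<in> D" "c a \<noteq> 0" "c b \<noteq> 0"
    then have "int a = int b" using index by metis
    then show "a = b" by simp
  qed (use c(1,2) valid_digitsD(2)[OF v] in auto)
  then have "0 \<le> C \<and> C \<le> (1 / ?r) ^ Suc k"
    using c(1) r by (simp add: C_def sum_nonneg divide_right_mono field_simps)
  moreover have "0 \<le> j \<and> j < int N ^ Suc k" if "C \<noteq> 0"
  proof -
    obtain e where e: "e \<in> D" "c e \<noteq> 0"
      using \<open>C \<noteq> 0\<close> sum.neutral unfolding C_def by force
    with c(3) have "0 \<le> ?j e" "?j e < ?m" by blast+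
    from leading_digit_bounds[OF this valid_digitsD(4)[OF v e(1)]] show ?thesis by simp
  qed
  moreover have "H ((of_int j + t) / real N ^ Suc k) = H (of_int j / real N ^ Suc k) + C * H t"
    if t: "t \<in> {0..1}" for t
  proof -
    have "H ((of_int j + t) / real N ^ Suc k) =
        (\<Sum>e\<in>D. H (of_int (?j e) / real N ^ k) + c e * H t) / ?r"
      by (subst cantor_functionD(2)[OF H]) (simp only: rescale c(4)[OF t])
    also have "\<dots> = (\<Sum>e\<in>D. H (of_int (?j e) / real N ^ k)) / ?r + C * H t"
      by (simp add: sum.distrib C_def add_divide_distrib sum_distrib_right)
    also have "(\<Sum>e\<in>D. H (of_int (?j e) / real N ^ k)) / ?r = H (of_int j / real N ^ Suc k)"
      using cantor_functionD(2)[OF H, of "of_int j / real N ^ Suc k"] rescale[of 0] by simp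
    finally show ?thesis .
  qed
  ultimately show ?case by blast
qed

lemma cantor_function_cell_increment_le:
  fixes j :: int
  assumes v: "valid_digits N D" and H: "cantor_function N D H" and t: "0 \<le> t" "t \<le> t'" "t' \<le> 1"
  shows "H ((of_int j + t') / real N ^ k) - H ((of_int j + t) / real N ^ k)
    \<le> (1 / real (card D)) ^ k * (H t' - H t)"
proof -
  obtain c where c: "0 \<le> c" "c \<le> (1 / real (card D)) ^ k"
    "\<And>t. t \<in> {0..1} \<Longrightarrow> H ((of_int j + t) / real N ^ k) = H (of_int j / real N ^ k) + c * H t"
    using cantor_function_cell_affine[OF v H, of k j] by blast
  have "H ((of_int j + t') / real N ^ k) - H ((of_int j + t) / real N ^ k) = c * (H t' - H t)"
    using c(3)[of t] c(3)[of t'] t by (simp add: right_diff_distrib)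
  also have "\<dots> \<le> (1 / real (card D)) ^ k * (H t' - H t)"
    using c(1,2) monoD[OF unit_interval_cdfD(1)[OF cantor_functionD(1)[OF H]] t(2)]
    by (intro mult_right_mono) auto
  finally show ?thesis .
qed

lemma cantor_function_increment_le:
  assumes v: "valid_digits N D" and H: "cantor_function N D H"
    and h: "0 \<le> h" "h \<le> 1 / real N ^ k"
  shows "H (y + h) - H y \<le> (1 / real (card D)) ^ k"
proof -
  let ?M = "real N ^ k" and ?q = "(1 / real (card D)) ^ k"
  have M: "0 < ?M" using valid_digitsD(1)[OF v] by simp
  have H01: "0 \<le> H z" "H z \<le> 1" for z
    using unit_interval_cdf_bounds[OF cantor_functionD(1)[OF H]] by auto
  define j t where "j = \<lfloor>y * ?M\<rfloor>" and "t = y * ?M - of_int j"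
  have t: "0 \<le> t" "t < 1" unfolding t_def j_def by linarith+
  have hM: "0 \<le> h * ?M" "h * ?M \<le> 1" using h M by (simp_all add: field_simps)
  have y: "y = (of_int j + t) / ?M" "y + h = (of_int j + (t + h * ?M)) / ?M"
    using M by (simp_all add: t_def field_simps)
  note cell = cantor_function_cell_increment_le[OF v H]
  show ?thesis
  proof (cases "t + h * ?M \<le> 1")
    case True
    have "H (y + h) - H y \<le> ?q * (H (t + h * ?M) - H t)"
      unfolding y(2) unfolding y(1) using t hM True by (intro cell) auto
    also have "\<dots> \<le> ?q * 1" using H01[of "t + h * ?M"] H01[of t] by (intro mult_left_mono) auto
    finally show ?thesis by simp
  next
    case False
    define t' where "t' = t + h * ?M - 1"
    have t': "0 \<le> t'" "t' \<le> t" using False hM by (simp_all add: t'_def)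
    have "H (y + h) - H y =
        (H ((of_int (j + 1) + t') / ?M) - H ((of_int (j + 1) + 0) / ?M)) +
        (H ((of_int j + 1) / ?M) - H ((of_int j + t) / ?M))"
      unfolding y(2) unfolding y(1) t'_def by (simp add: algebra_simps)
    also have "\<dots> \<le> ?q * (H t' - H 0) + ?q * (H 1 - H t)"
      using t t' by (intro add_mono cell) auto
    also have "\<dots> = ?q * (1 - (H t - H t'))"
      using unit_interval_cdfD(2,3)[OF cantor_functionD(1)[OF H]] by (simp add: algebra_simps)
    also have "\<dots> \<le> ?q"
      using monoD[OF unit_interval_cdfD(1)[OF cantor_functionD(1)[OF H]] t'(2)]
      by (intro mult_left_le) auto
    finally show ?thesis .
  qed
qed

lemma cantor_function_continuous_from_right:
  assumes v: "valid_digits N D" and H: "cantor_function N D H"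
  shows "continuous (at_right a) H"
proof -
  have "\<exists>d>0. H (a + d) - H a < e" if "0 < e" for e
  proof -
    have "1 / real (card D) < 1" using valid_digitsD(3)[OF v] by simp
    then obtain k where k: "(1 / real (card D)) ^ k < e" using real_arch_pow_inv \<open>0 < e\<close> by blast
    have "0 < 1 / real N ^ k" using valid_digitsD(1)[OF v] by simp
    moreover have "H (a + 1 / real N ^ k) - H a < e"
      using cantor_function_increment_le[OF v H, of "1 / real N ^ k" k a] k by simp
    ultimately show ?thesis by blast
  qed
  moreover have "H x \<le> H y" if "x \<le> y" for x y
    using that monoD[OF unit_interval_cdfD(1)[OF cantor_functionD(1)[OF H]]] by blast
  ultimately show ?thesis by (simp add: continuous_at_right_real_increasing)
qed

section \<open>The Cantor measure\<close>

lemma self_similar_fixed_point_le_scaled: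
  assumes v: "valid_digits N D" and F: "self_similar_op N D F = F" "mono F"
  shows "F y \<le> F (real N ^ k * y)"
proof -
  have r: "2 \<le> real (card D)" using valid_digitsD(3)[OF v] .
  have up: "F w \<le> F (real N * w)" for w
  proof -
    have "(\<Sum>d\<in>D. F (real N * w - real d)) / real (card D) \<le> (\<Sum>d\<in>D. F (real N * w)) / real (card D)"
      using r by (intro divide_right_mono sum_mono monoD[OF F(2)]) auto
    then show ?thesis using fun_cong[OF F(1), of w] r by (simp add: self_similar_op_def)
  qed
  show ?thesis
  proof (induction k)
    case (Suc k)
    then show ?case using up[of "real N ^ k * y"] by (simp add: mult.assoc)
  qed simp
qed

lemma self_similar_fixed_point_ge_scaled:
  assumes v: "valid_digits N D" and F: "self_similar_op N D F = F" "mono F"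
  shows "F (1 + real N ^ k * (y - 1)) \<le> F y"
proof -
  have r: "2 \<le> real (card D)" using valid_digitsD(3)[OF v] .
  have down: "F (1 + real N * (w - 1)) \<le> F w" for w
  proof -
    have "1 + real N * (w - 1) \<le> real N * w - real d" if "d \<in> D" for d
      using valid_digitsD(4)[OF v that] by (simp add: algebra_simps)
    then have "(\<Sum>d\<in>D. F (1 + real N * (w - 1))) / real (card D)
        \<le> (\<Sum>d\<in>D. F (real N * w - real d)) / real (card D)"
      using r by (intro divide_right_mono sum_mono monoD[OF F(2)]) auto
    then show ?thesis using fun_cong[OF F(1), of w] r by (simp add: self_similar_op_def)
  qed
  show ?thesis
  proof (induction k)
    case (Suc k)
    have "1 + real N ^ Suc k * (y - 1) = 1 + real N * ((1 + real N ^ k * (y - 1)) - 1)" by simp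
    then have "F (1 + real N ^ Suc k * (y - 1)) \<le> F (1 + real N ^ k * (y - 1))"
      using down by metis
    then show ?case using Suc by linarith
  qed simp
qed

lemma self_similar_fixed_point_eq_0:
  assumes v: "valid_digits N D" and F: "self_similar_op N D F = F" "mono F" "\<And>z. 0 \<le> F z"
    and lim: "(F \<longlongrightarrow> 0) at_bot" and "y \<le> 0"
  shows "F y = 0"
proof -
  have N: "3 \<le> N" and r: "2 \<le> real (card D)" using valid_digitsD[OF v] by auto
  have neg: "F z = 0" if "z < 0" for z
  proof (rule ccontr)
    assume "F z \<noteq> 0"
    then have "0 < F z" using F(3)[of z] by simp
    from order_tendstoD(2)[OF lim this] obtain b where b: "\<And>w. w \<le> b \<Longrightarrow> F w < F z"
      by (auto simp: eventually_at_bot_linorder)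
    obtain k where "b / z < real N ^ k" using real_arch_pow[of "real N" "b / z"] N by auto
    then have "real N ^ k * z \<le> b" using \<open>z < 0\<close> by (simp add: divide_less_eq mult.commute)
    then have "F (real N ^ k * z) < F z" by (rule b)
    with self_similar_fixed_point_le_scaled[OF v F(1,2), of z k] show False by simp
  qed
  have "(\<Sum>d\<in>D. F (real N * 0 - real d)) = (\<Sum>d\<in>D. if d = 0 then F 0 else 0)"
    by (rule sum.cong) (auto intro!: neg)
  also have "\<dots> \<le> F 0" using valid_digitsD(2)[OF v] F(3)[of 0] by (simp add: sum.delta)
  finally have "(\<Sum>d\<in>D. F (real N * 0 - real d)) \<le> F 0" .
  moreover have "real (card D) * F 0 = (\<Sum>d\<in>D. F (real N * 0 - real d))"
    using r fun_cong[OF F(1), of 0] by (simp add: self_similar_op_def field_simps)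
  moreover have "2 * F 0 \<le> real (card D) * F 0" using F(3)[of 0] r by (intro mult_right_mono)
  ultimately have "F 0 = 0" using F(3)[of 0] by linarith
  then show ?thesis using neg \<open>y \<le> 0\<close> by (cases "y = 0") auto
qed

lemma self_similar_fixed_point_eq_1:
  assumes v: "valid_digits N D" and F: "self_similar_op N D F = F" "mono F" "\<And>z. F z \<le> 1"
    and lim: "(F \<longlongrightarrow> 1) at_top" and "1 \<le> y"
  shows "F y = 1"
proof -
  have N: "3 \<le> N" and r: "2 \<le> real (card D)" using valid_digitsD[OF v] by auto
  have gt: "F z = 1" if "1 < z" for z
  proof (rule ccontr)
    assume "F z \<noteq> 1"
    then have "F z < 1" using F(3)[of z] by simp
    from order_tendstoD(1)[OF lim this] obtain b where b: "\<And>w. b \<le> w \<Longrightarrow> F z < F w"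
      by (auto simp: eventually_at_top_linorder)
    obtain k where "(b - 1) / (z - 1) < real N ^ k"
      using real_arch_pow[of "real N" "(b - 1) / (z - 1)"] N by auto
    then have "b \<le> 1 + real N ^ k * (z - 1)"
      using \<open>1 < z\<close> by (simp add: divide_less_eq mult.commute)
    then have "F z < F (1 + real N ^ k * (z - 1))" by (rule b)
    with self_similar_fixed_point_ge_scaled[OF v F(1,2), of k z] show False by simp
  qed
  have "(\<Sum>d\<in>D. 1 - F (real N * 1 - real d)) = (\<Sum>d\<in>D. if d = N - 1 then 1 - F 1 else 0)"
  proof (rule sum.cong)
    fix d assume "d \<in> D"
    then have "d = N - 1 \<or> d + 2 \<le> N" using valid_digitsD(4)[OF v] by fastforce
    then have "d = N - 1 \<or> 1 < real N * 1 - real d" by auto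
    then show "1 - F (real N * 1 - real d) = (if d = N - 1 then 1 - F 1 else 0)"
      using N gt by (auto simp: of_nat_diff)
  qed simp
  also have "\<dots> \<le> 1 - F 1" using valid_digitsD(2)[OF v] F(3)[of 1] by (simp add: sum.delta)
  finally have "(\<Sum>d\<in>D. 1 - F (real N * 1 - real d)) \<le> 1 - F 1" .
  moreover have "real (card D) * F 1 = (\<Sum>d\<in>D. F (real N * 1 - real d))"
    using r fun_cong[OF F(1), of 1] by (simp add: self_similar_op_def field_simps)
  moreover have "2 * (1 - F 1) \<le> real (card D) * (1 - F 1)"
    using F(3)[of 1] r by (intro mult_right_mono) auto
  ultimately have "F 1 = 1" using F(3)[of 1] by (simp add: sum_subtractf algebra_simps)
  then show ?thesis using gt \<open>1 \<le> y\<close> by (cases "y = 1") auto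
qed

lemma unit_interval_cdf_fixed_cdf:
  assumes v: "valid_digits N D" and "real_distribution \<mu>"
    and fixed: "self_similar_op N D (cdf \<mu>) = cdf \<mu>"
  shows "unit_interval_cdf (cdf \<mu>)"
proof -
  interpret real_distribution \<mu> by fact
  have mono: "mono (cdf \<mu>)" by (simp add: mono_def cdf_nondecreasing)
  show ?thesis
    unfolding unit_interval_cdf_def
  proof (intro conjI allI impI mono)
    fix y :: real
    show "cdf \<mu> y = 0" if "y \<le> 0"
      using v fixed mono cdf_nonneg cdf_lim_at_bot that by (rule self_similar_fixed_point_eq_0)
    show "cdf \<mu> y = 1" if "1 \<le> y"
      using v fixed mono cdf_bounded_prob cdf_lim_at_top_prob that
      by (rule self_similar_fixed_point_eq_1)
  qed
qed

lemma cphi_measurable [measurable]: "cphi N d \<in> borel_measurable borel"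
  unfolding cphi_def by measurable

lemma cphi_vimage_atMost:
  assumes "0 < N"
  shows "cphi N d -` {..y} = {..real N * y - real d}"
  using assms by (auto simp: cphi_def field_simps)

definition self_similar_measure :: "nat \<Rightarrow> nat set \<Rightarrow> real measure \<Rightarrow> bool" where
  "self_similar_measure N D \<mu> \<longleftrightarrow> sets \<mu> = sets borel \<and> prob_space \<mu> \<and>
     (\<forall>A \<in> sets borel. emeasure \<mu> A =
        (\<Sum>d\<in>D. emeasure \<mu> (cphi N d -` A)) / ennreal (real (card D)))"

lemma cantor_measure_eq_The: "cantor_measure N D = (THE \<mu>. self_similar_measure N D \<mu>)"
  by (simp add: cantor_measure_def self_similar_measure_def)

lemma self_similar_measure_real_distribution:
  assumes "self_similar_measure N D \<mu>"
  shows "real_distribution \<mu>"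
  using assms unfolding self_similar_measure_def real_distribution_def real_distribution_axioms_def
  by simp

lemma self_similar_sum_atMost:
  assumes v: "valid_digits N D" and "real_distribution \<mu>"
  shows "(\<Sum>d\<in>D. emeasure \<mu> (cphi N d -` {..y})) / ennreal (real (card D)) =
    ennreal (self_similar_op N D (cdf \<mu>) y)"
proof -
  interpret real_distribution \<mu> by fact
  have "(\<Sum>d\<in>D. emeasure \<mu> (cphi N d -` {..y})) = (\<Sum>d\<in>D. ennreal (cdf \<mu> (real N * y - real d)))"
    using valid_digitsD(1)[OF v] by (simp add: cphi_vimage_atMost emeasure_eq_measure cdf_def)
  then show ?thesis
    using valid_digitsD(3)[OF v]
    by (simp add: self_similar_op_def sum_ennreal cdf_nonneg sum_nonneg divide_ennreal)
qed

lemma self_similar_op_cdf_nonneg: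
  assumes "real_distribution \<mu>"
  shows "0 \<le> self_similar_op N D (cdf \<mu>) y"
proof -
  interpret real_distribution \<mu> by fact
  show ?thesis by (simp add: self_similar_op_def sum_nonneg cdf_nonneg)
qed

lemma self_similar_measure_cdf:
  assumes v: "valid_digits N D" and \<mu>: "self_similar_measure N D \<mu>"
  shows "self_similar_op N D (cdf \<mu>) = cdf \<mu>"
proof
  fix y
  have rd: "real_distribution \<mu>" using self_similar_measure_real_distribution[OF \<mu>] .
  then interpret real_distribution \<mu> .
  have "ennreal (cdf \<mu> y) = emeasure \<mu> {..y}" by (simp add: cdf_def emeasure_eq_measure)
  also have "\<dots> = ennreal (self_similar_op N D (cdf \<mu>) y)"
    using \<mu> self_similar_sum_atMost[OF v rd] unfolding self_similar_measure_def by simp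
  finally show "self_similar_op N D (cdf \<mu>) y = cdf \<mu> y"
    using self_similar_op_cdf_nonneg[OF rd] by (simp add: cdf_nonneg)
qed

lemma self_similar_image_exists:
  assumes v: "valid_digits N D" and "real_distribution \<mu>"
  obtains \<nu> where "real_distribution \<nu>"
    "\<And>A. A \<in> sets borel \<Longrightarrow>
      emeasure \<nu> A = (\<Sum>d\<in>D. emeasure \<mu> (cphi N d -` A)) / ennreal (real (card D))"
proof
  interpret real_distribution \<mu> by fact
  have D: "finite D" "D \<noteq> {}" using valid_digitsD(2,3)[OF v] by auto
  define B where "B d = distr \<mu> borel (cphi N d)" for d
  let ?\<nu> = "measure_pmf (pmf_of_set D) \<bind> B"
  have P: "measure_pmf (pmf_of_set D) \<in> space (prob_algebra (count_space UNIV))"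
    by (simp add: space_prob_algebra measure_pmf.prob_space_axioms)
  have "cphi N d \<in> \<mu> \<rightarrow>\<^sub>M borel" for d
    by (subst measurable_cong_sets[OF events_eq_borel refl]) simp
  then have B: "B \<in> count_space UNIV \<rightarrow>\<^sub>M prob_algebra borel"
    unfolding measurable_count_space_eq1
    by (auto simp: B_def space_prob_algebra intro!: prob_space_distr)
  show "real_distribution ?\<nu>"
    using prob_space_bind'[OF P B] sets_bind'[OF P B]
    by (simp add: real_distribution_def real_distribution_axioms_def)
  fix A :: "real set" assume A: "A \<in> sets borel"
  have "emeasure ?\<nu> A = (\<integral>\<^sup>+d. emeasure (B d) A \<partial>measure_pmf (pmf_of_set D))"
    by (rule emeasure_bind_prob_algebra[OF P B A])
  also have "\<dots> = (\<Sum>d\<in>D. emeasure (B d) A) / of_nat (card D)"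
    by (rule nn_integral_pmf_of_set[OF D(2,1)])
  also have "(\<Sum>d\<in>D. emeasure (B d) A) = (\<Sum>d\<in>D. emeasure \<mu> (cphi N d -` A))"
    using A by (intro sum.cong refl) (simp add: B_def emeasure_distr)
  finally show "emeasure ?\<nu> A = (\<Sum>d\<in>D. emeasure \<mu> (cphi N d -` A)) / ennreal (real (card D))"
    by (simp add: ennreal_of_nat_eq_real_of_nat)
qed

lemma cantor_function_interval_measure:
  assumes v: "valid_digits N D" and H: "cantor_function N D H"
  shows "real_distribution (interval_measure H)" "cdf (interval_measure H) = H"
proof -
  have H01: "unit_interval_cdf H" by (rule cantor_functionD(1)[OF H])
  have mono: "H x \<le> H y" if "x \<le> y" for x y
    using that monoD[OF unit_interval_cdfD(1)[OF H01]] by blast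
  have "\<forall>\<^sub>F x in at_bot. H x = 0"
    by (rule eventually_at_bot_linorderI[of 0]) (rule unit_interval_cdfD(2)[OF H01])
  then have bot: "(H \<longlongrightarrow> 0) at_bot" by (rule tendsto_eventually)
  have "\<forall>\<^sub>F x in at_top. H x = 1"
    by (rule eventually_at_top_linorderI[of 1]) (rule unit_interval_cdfD(3)[OF H01])
  then have top: "(H \<longlongrightarrow> 1) at_top" by (rule tendsto_eventually)
  note cont = cantor_function_continuous_from_right[OF v H]
  show "real_distribution (interval_measure H)"
    by (rule real_distribution_interval_measure[OF mono cont bot top])
  show "cdf (interval_measure H) = H"
    by (rule cdf_interval_measure[OF mono cont bot])
qed

lemma self_similar_measure_interval_measure:
  assumes v: "valid_digits N D" and H: "cantor_function N D H"
  shows "self_similar_measure N D (interval_measure H)"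
proof -
  let ?\<mu> = "interval_measure H"
  note \<mu> = cantor_function_interval_measure[OF v H]
  obtain \<nu> where \<nu>: "real_distribution \<nu>"
    "\<And>A. A \<in> sets borel \<Longrightarrow>
      emeasure \<nu> A = (\<Sum>d\<in>D. emeasure ?\<mu> (cphi N d -` A)) / ennreal (real (card D))"
    using self_similar_image_exists[OF v \<mu>(1)] by blast
  interpret \<nu>: real_distribution \<nu> by (rule \<nu>(1))
  have "cdf \<nu> = H"
  proof
    fix y
    have "ennreal (cdf \<nu> y) = ennreal (self_similar_op N D (cdf ?\<mu>) y)"
      using \<nu>(2)[of "{..y}"] self_similar_sum_atMost[OF v \<mu>(1)]
      by (simp add: \<nu>.emeasure_eq_measure cdf_def)
    then show "cdf \<nu> y = H y"
      using H \<nu>.cdf_nonneg unit_interval_cdf_bounds(1)[OF cantor_functionD(1)[OF H]]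
      by (simp add: \<mu>(2) cantor_function_def)
  qed
  then have "\<nu> = ?\<mu>" using \<mu> by (intro cdf_unique[OF \<nu>(1)]) simp_all
  then show ?thesis
    using \<nu>(2) real_distribution.axioms(1)[OF \<mu>(1)] by (simp add: self_similar_measure_def)
qed

lemma cantor_measure_eq_interval_measure:
  assumes v: "valid_digits N D" and H: "cantor_function N D H"
  shows "cantor_measure N D = interval_measure H"
  unfolding cantor_measure_eq_The
proof (rule the_equality)
  show "self_similar_measure N D (interval_measure H)"
    by (rule self_similar_measure_interval_measure[OF v H])
  fix \<mu> assume \<mu>: "self_similar_measure N D \<mu>"
  have rd: "real_distribution \<mu>" by (rule self_similar_measure_real_distribution[OF \<mu>])
  have "cantor_function N D (cdf \<mu>)"
    using unit_interval_cdf_fixed_cdf[OF v rd] self_similar_measure_cdf[OF v \<mu>]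
    by (simp add: cantor_function_def)
  then have "cdf \<mu> = cdf (interval_measure H)"
    using cantor_function_unique[OF v _ H] cantor_function_interval_measure[OF v H] by simp
  then show "\<mu> = interval_measure H"
    by (rule cdf_unique[OF rd cantor_function_interval_measure(1)[OF v H]])
qed

lemma cantor_cdf_eq_cantor_function:
  assumes v: "valid_digits N D" and H: "cantor_function N D H" and "0 \<le> x"
  shows "cantor_cdf N D x = H x"
proof -
  let ?\<mu> = "interval_measure H"
  note \<mu> = cantor_function_interval_measure[OF v H]
  interpret real_distribution ?\<mu> by (rule \<mu>(1))
  have "measure ?\<mu> {..<0} \<le> measure ?\<mu> {..0}" by (intro finite_measure_mono) auto
  also have "\<dots> = 0"
    using fun_cong[OF \<mu>(2), of 0] unit_interval_cdfD(2)[OF cantor_functionD(1)[OF H], of 0]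
    by (simp add: cdf_def)
  finally have "measure ?\<mu> {..<0} = 0" by (simp add: measure_le_0_iff)
  moreover have "{..x} = {..<0} \<union> {0..x}" using \<open>0 \<le> x\<close> by auto
  then have "measure ?\<mu> {..x} = measure ?\<mu> {..<0} + measure ?\<mu> {0..x}"
    by (simp only:) (subst finite_measure_Union, auto)
  ultimately show ?thesis
    using fun_cong[OF \<mu>(2), of x] cantor_measure_eq_interval_measure[OF v H]
    by (simp add: cantor_cdf_def cdf_def)
qed

section \<open>Comparing two Cantor functions\<close>

(* cphi N d (cphi M e x) = cphi (N * M) (M * d + e) x *)
definition composed_digits :: "nat \<Rightarrow> nat set \<Rightarrow> nat set \<Rightarrow> nat set" where
  "composed_digits M D E = (\<lambda>(d, e). M * d + e) ` (D \<times> E)"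

lemma mem_composed_digits_iff:
  fixes M k :: nat
  assumes "\<And>e. e \<in> E \<Longrightarrow> e < M"
  shows "k \<in> composed_digits M D E \<longleftrightarrow> k div M \<in> D \<and> k mod M \<in> E"
proof
  assume "k \<in> composed_digits M D E"
  then obtain d e where "d \<in> D" "e \<in> E" "k = M * d + e" by (auto simp: composed_digits_def)
  then show "k div M \<in> D \<and> k mod M \<in> E" using assms[OF \<open>e \<in> E\<close>] by simp
next
  assume "k div M \<in> D \<and> k mod M \<in> E"
  moreover have "k = M * (k div M) + k mod M" by simp
  ultimately show "k \<in> composed_digits M D E"
    unfolding composed_digits_def by (intro image_eqI[of _ _ "(k div M, k mod M)"]) auto
qed

lemma inj_on_composed_digits:
  fixes M :: nat
  assumes "\<And>e. e \<in> E \<Longrightarrow> e < M"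
  shows "inj_on (\<lambda>(d, e). M * d + e) (D \<times> E)"
proof (rule inj_onI, clarify)
  fix d e d' e' assume "e \<in> E" "e' \<in> E" "M * d + e = M * d' + e'"
  then have "(M * d + e) div M = (M * d' + e') div M" "(M * d + e) mod M = (M * d' + e') mod M"
    by simp_all
  then show "d = d' \<and> e = e'" using assms[OF \<open>e \<in> E\<close>] assms[OF \<open>e' \<in> E\<close>] by simp
qed

lemma composed_digits_subset:
  fixes N M :: nat
  assumes "\<And>d. d \<in> D \<Longrightarrow> d < N" and "\<And>e. e \<in> E \<Longrightarrow> e < M"
  shows "composed_digits M D E \<subseteq> {..<N * M}"
proof
  fix k assume "k \<in> composed_digits M D E"
  then obtain d e where de: "d \<in> D" "e \<in> E" "k = M * d + e" by (auto simp: composed_digits_def)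
  have "M * d + e < M * (d + 1)" using assms(2)[OF de(2)] by simp
  also have "\<dots> \<le> M * N" using assms(1)[OF de(1)] by (intro mult_le_mono2) simp
  finally show "k \<in> {..<N * M}" using de(3) by (simp add: mult.commute)
qed

lemma self_similar_op_compose:
  assumes "finite D" "finite E" and E: "\<And>e. e \<in> E \<Longrightarrow> e < M"
  shows "self_similar_op N D (self_similar_op M E G) =
    self_similar_op (N * M) (composed_digits M D E) G"
proof
  fix y
  note inj = inj_on_composed_digits[OF E, where D = D]
  have "self_similar_op N D (self_similar_op M E G) y =
      (\<Sum>d\<in>D. \<Sum>e\<in>E. G (real (N * M) * y - real (M * d + e))) / (real (card D) * real (card E))"
    by (simp add: self_similar_op_def sum_divide_distrib[symmetric] algebra_simps)
  moreover have "(\<Sum>d\<in>D. \<Sum>e\<in>E. G (real (N * M) * y - real (M * d + e))) =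
      (\<Sum>k\<in>composed_digits M D E. G (real (N * M) * y - real k))"
    unfolding composed_digits_def sum.cartesian_product
    by (subst sum.reindex[OF inj]) (auto simp: comp_def intro!: sum.cong)
  moreover have "card D * card E = card (composed_digits M D E)"
    using card_image[OF inj] by (simp add: composed_digits_def card_cartesian_product)
  ultimately show "self_similar_op N D (self_similar_op M E G) y =
      self_similar_op (N * M) (composed_digits M D E) G y"
    by (simp add: self_similar_op_def flip: of_nat_mult)
qed

lemma cantor_function_eq_if_composed_digits_eq:
  assumes v1: "valid_digits N D" and v2: "valid_digits M E"
    and H1: "cantor_function N D H1" and H2: "cantor_function M E H2"
    and comm: "composed_digits M D E = composed_digits N E D"
  shows "H1 = H2"
proof -
  have "self_similar_op M E (self_similar_op N D G) = self_similar_op N D (self_similar_op M E G)"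
    for G
    using self_similar_op_compose[of D E M N G] self_similar_op_compose[of E D N M G]
      valid_digitsD[OF v1] valid_digitsD[OF v2] comm
    by (simp add: mult.commute)
  then have "self_similar_op M E (self_similar_op N D H2) = self_similar_op N D H2"
    using H2 by (simp add: cantor_function_def)
  then have "cantor_function M E (self_similar_op N D H2)"
    using unit_interval_cdf_self_similar_op[OF v1 cantor_functionD(1)[OF H2]]
    by (simp add: cantor_function_def)
  then have "self_similar_op N D H2 = H2" by (rule cantor_function_unique[OF v2 _ H2])
  then have "cantor_function N D H2" using H2 by (simp add: cantor_function_def)
  then show ?thesis by (rule cantor_function_unique[OF v1 H1])
qed

lemma digits_below_Suc:
  "digits_below D (Suc k) = digits_below D k + (if k \<in> D then 1 else 0)"
proof -
  have "{e\<in>D. e < Suc k} = (if k \<in> D then insert k {e\<in>D. e < k} else {e\<in>D. e < k})"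
    by (auto simp: less_Suc_eq)
  moreover have "finite {e\<in>D. e < k}" by (rule finite_subset[of _ "{..<k}"]) auto
  ultimately show ?thesis by (simp add: digits_below_def)
qed

lemma set_eq_if_digits_below_eq:
  assumes "A \<subseteq> {..<L}" "B \<subseteq> {..<L}" and "\<And>k. k \<le> L \<Longrightarrow> digits_below A k = digits_below B k"
  shows "A = B"
proof (rule set_eqI)
  fix i
  show "i \<in> A \<longleftrightarrow> i \<in> B"
  proof (cases "i < L")
    case True
    then show ?thesis
      using assms(3)[of i] assms(3)[of "Suc i"] by (simp add: digits_below_Suc split: if_splits)
  qed (use assms(1,2) in auto)
qed

lemma cantor_function_two_level:
  assumes v: "valid_digits N D" and H: "cantor_function N D H" and "0 < M"
    and grid: "\<And>e. e \<le> M \<Longrightarrow> H (real e / real M) = real (digits_below E e) / real (card E)"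
    and "d < N" "e \<le> M"
  shows "H (real (M * d + e) / real (N * M)) =
    (real (digits_below D d) + (if d \<in> D then real (digits_below E e) / real (card E) else 0))
      / real (card D)"
proof -
  have "real (M * d + e) / real (N * M) = (real d + real e / real M) / real N"
    using \<open>0 < M\<close> valid_digitsD(1)[OF v] by (simp add: field_simps)
  moreover have "0 \<le> real e / real M" "real e / real M \<le> 1"
    using \<open>e \<le> M\<close> \<open>0 < M\<close> by (auto simp: field_simps)
  ultimately show ?thesis
    using cantor_function_digit_cell[OF v H \<open>d < N\<close>] grid[OF \<open>e \<le> M\<close>] by simp
qed

lemma cantor_function_composed_grid_step:
  assumes v: "valid_digits N D" and v': "valid_digits M E" and H: "cantor_function N D H"
    and grid: "\<And>e. e \<le> M \<Longrightarrow> H (real e / real M) = real (digits_below E e) / real (card E)"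
    and "k < N * M"
  shows "H (real (Suc k) / real (N * M)) - H (real k / real (N * M)) =
    (if k \<in> composed_digits M D E then 1 else 0) / (real (card D) * real (card E))"
proof -
  define d e where "d = k div M" and "e = k mod M"
  have M_pos: "0 < M" and s: "2 \<le> real (card E)" using valid_digitsD[OF v'] by auto
  have k: "k = M * d + e" "Suc k = M * d + Suc e" by (simp_all add: d_def e_def)
  have "d < N" using \<open>k < N * M\<close> by (simp add: d_def less_mult_imp_div_less)
  have "e < M" using M_pos by (simp add: e_def)
  have two_level: "H (real (M * d + e') / real (N * M)) =
      (real (digits_below D d) + (if d \<in> D then real (digits_below E e') / real (card E) else 0))
        / real (card D)" if "e' \<le> M" for e'
    by (rule cantor_function_two_level[OF v H M_pos grid \<open>d < N\<close> that])
  have "H (real (Suc k) / real (N * M)) - H (real k / real (N * M)) =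
      (if d \<in> D \<and> e \<in> E then 1 else 0) / (real (card D) * real (card E))"
    unfolding k(2) two_level[OF Suc_leI[OF \<open>e < M\<close>]]
    unfolding k(1) two_level[OF less_imp_le[OF \<open>e < M\<close>]]
    using s valid_digitsD(3)[OF v] by (auto simp: digits_below_Suc field_simps)
  then show ?thesis
    using mem_composed_digits_iff[OF valid_digitsD(4)[OF v'], where k = k and D = D]
    by (simp add: d_def e_def)
qed

lemma cantor_function_composed_grid:
  assumes v: "valid_digits N D" and v': "valid_digits M E" and H: "cantor_function N D H"
    and grid: "\<And>e. e \<le> M \<Longrightarrow> H (real e / real M) = real (digits_below E e) / real (card E)"
    and "k \<le> N * M"
  shows "H (real k / real (N * M)) =
    real (digits_below (composed_digits M D E) k) / (real (card D) * real (card E))"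
  using \<open>k \<le> N * M\<close>
proof (induction k)
  case 0
  show ?case
    by (simp add: digits_below_def unit_interval_cdfD(2)[OF cantor_functionD(1)[OF H]])
next
  case (Suc k)
  then have "H (real (Suc k) / real (N * M)) = H (real k / real (N * M)) +
      (if k \<in> composed_digits M D E then 1 else 0) / (real (card D) * real (card E))"
    using cantor_function_composed_grid_step[OF v v' H grid, of k] by simp
  then show ?case using Suc by (simp add: digits_below_Suc add_divide_distrib)
qed

lemma min_inverse_cubes_less:
  fixes r s :: real
  assumes "2 \<le> r" "2 \<le> s"
  shows "min ((1 / r) ^ 3) ((1 / s) ^ 3) < 1 / (r * s)"
proof -
  have *: "(1 / b) ^ 3 < 1 / (a * b)" if "2 \<le> a" "a \<le> b" for a b :: real
  proof -
    have "a * b \<le> b * b" using that by (intro mult_right_mono) auto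
    also have "\<dots> < b ^ 3" using that by (simp add: power3_eq_cube)
    finally show ?thesis using that by (simp add: power_divide divide_strict_left_mono)
  qed
  show ?thesis
    using *[of r s] *[of s r] assms by (cases "r \<le> s") (auto simp: min_less_iff_disj mult.commute)
qed

lemma unit_interval_grid_bracket:
  fixes m :: nat
  assumes "0 < m" "0 \<le> x" "x \<le> 1"
  obtains i where "i \<le> m" "real i / real m \<le> x" "x \<le> real (i + 1) / real m"
proof
  define i where "i = nat \<lfloor>x * real m\<rfloor>"
  have i: "real i \<le> x * real m" "x * real m \<le> real i + 1"
    unfolding i_def using assms by auto
  moreover have "x * real m \<le> real m" using assms by (simp add: mult_left_le_one_le)
  ultimately show "i \<le> m" by linarith
  show "real i / real m \<le> x" "x \<le> real (i + 1) / real m"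
    using i assms by (simp_all add: field_simps)
qed

lemma cantor_functions_close:
  assumes v1: "valid_digits N D" and v2: "valid_digits M E"
    and H1: "cantor_function N D H1" and H2: "cantor_function M E H2"
    and "N \<le> K" "M \<le> K"
    and cube: "\<And>j. j \<le> K ^ 3 \<Longrightarrow> H1 (real j / real K ^ 3) = H2 (real j / real K ^ 3)"
    and x: "0 \<le> x" "x \<le> 1"
  shows "\<bar>H1 x - H2 x\<bar> < 1 / (real (card D) * real (card E))"
proof -
  let ?m = "real K ^ 3"
  have N: "3 \<le> N" and M: "3 \<le> M" using valid_digitsD(1)[OF v1] valid_digitsD(1)[OF v2] .
  then have "0 < K ^ 3" using \<open>N \<le> K\<close> by simp
  then obtain i where i: "i \<le> K ^ 3" "real i / ?m \<le> x" "x \<le> real (i + 1) / ?m"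
    using unit_interval_grid_bracket[OF _ x] by (metis of_nat_power)
  define a b where "a = real i / ?m" and "b = real (i + 1) / ?m"
  have between: "H a \<le> H x" "H x \<le> H b" if "cantor_function P Q H" for P Q H
    using i monoD[OF unit_interval_cdfD(1)[OF cantor_functionD(1)[OF that]]]
    by (simp_all add: a_def b_def)
  have eq_a: "H1 a = H2 a" using cube[OF i(1)] by (simp add: a_def)
  have eq_b: "H1 b = H2 b"
  proof (cases "i + 1 \<le> K ^ 3")
    case True
    then show ?thesis using cube[OF True] by (simp add: b_def)
  next
    case False
    then have "real K ^ 3 \<le> real (i + 1)" by (metis nat_le_linear of_nat_le_iff of_nat_power)
    then have "1 \<le> b" using \<open>0 < K ^ 3\<close> by (simp add: b_def)
    then show ?thesis
      using unit_interval_cdfD(3)[OF cantor_functionD(1)[OF H1]]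
        unit_interval_cdfD(3)[OF cantor_functionD(1)[OF H2]] by simp
  qed
  have bracket: "\<bar>H1 x - H2 x\<bar> \<le> H1 b - H1 a"
    using eq_a eq_b between[OF H1] between[OF H2] by (simp add: abs_le_iff)
  have "b = a + 1 / ?m" by (simp add: a_def b_def add_divide_distrib)
  moreover have "1 / ?m \<le> 1 / real N ^ 3" "1 / ?m \<le> 1 / real M ^ 3"
    using N M \<open>N \<le> K\<close> \<open>M \<le> K\<close> by (simp_all add: frac_le power_mono)
  ultimately have "H1 b - H1 a \<le> (1 / real (card D)) ^ 3" "H2 b - H2 a \<le> (1 / real (card E)) ^ 3"
    using cantor_function_increment_le[OF v1 H1, of "1 / ?m" 3 a]
      cantor_function_increment_le[OF v2 H2, of "1 / ?m" 3 a] by simp_all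
  then have "H1 b - H1 a \<le> min ((1 / real (card D)) ^ 3) ((1 / real (card E)) ^ 3)"
    using eq_a eq_b by simp
  also have "\<dots> < 1 / (real (card D) * real (card E))"
    using valid_digitsD(3)[OF v1] valid_digitsD(3)[OF v2] by (rule min_inverse_cubes_less)
  finally show ?thesis using bracket by linarith
qed

lemma cantor_functions_eq_if_agree_on_grids:
  assumes v1: "valid_digits N D" and v2: "valid_digits M E"
    and H1: "cantor_function N D H1" and H2: "cantor_function M E H2"
    and "N \<le> K" "M \<le> K"
    and frac: "\<And>n j. 0 < n \<Longrightarrow> n \<le> K \<Longrightarrow> j \<le> n \<Longrightarrow> H1 (real j / real n) = H2 (real j / real n)"
    and cube: "\<And>j. j \<le> K ^ 3 \<Longrightarrow> H1 (real j / real K ^ 3) = H2 (real j / real K ^ 3)"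
  shows "H1 = H2"
proof (rule cantor_function_eq_if_composed_digits_eq[OF v1 v2 H1 H2])
  have N: "0 < N" and M: "0 < M" using valid_digitsD(1)[OF v1] valid_digitsD(1)[OF v2] by auto
  have rs: "0 < real (card D) * real (card E)"
    using valid_digitsD(3)[OF v1] valid_digitsD(3)[OF v2] by simp
  have gridE: "H1 (real e / real M) = real (digits_below E e) / real (card E)" if "e \<le> M" for e
    using frac[OF M \<open>M \<le> K\<close> that] cantor_function_at_grid[OF v2 H2 that] by simp
  have gridD: "H2 (real d / real N) = real (digits_below D d) / real (card D)" if "d \<le> N" for d
    using frac[OF N \<open>N \<le> K\<close> that] cantor_function_at_grid[OF v1 H1 that] by simp
  have "digits_below (composed_digits M D E) k = digits_below (composed_digits N E D) k"
    if "k \<le> N * M" for k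
  proof -
    let ?x = "real k / real (N * M)"
    have "real k \<le> real (N * M)" using that by (simp only: of_nat_le_iff)
    then have x: "0 \<le> ?x" "?x \<le> 1" using N M by (simp_all add: divide_le_eq_1)
    have "\<bar>H1 ?x - H2 ?x\<bar> < 1 / (real (card D) * real (card E))"
      using cantor_functions_close[OF v1 v2 H1 H2 \<open>N \<le> K\<close> \<open>M \<le> K\<close> cube x] .
    moreover have "H1 ?x =
        real (digits_below (composed_digits M D E) k) / (real (card D) * real (card E))"
      by (rule cantor_function_composed_grid[OF v1 v2 H1 gridE that])
    moreover have "H2 ?x =
        real (digits_below (composed_digits N E D) k) / (real (card E) * real (card D))"
      using cantor_function_composed_grid[OF v2 v1 H2 gridD, of k] that by (simp add: mult.commute)
    ultimately have "\<bar>real (digits_below (composed_digits M D E) k)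
        - real (digits_below (composed_digits N E D) k)\<bar> < 1"
      using rs by (simp add: mult.commute abs_divide divide_less_cancel flip: diff_divide_distrib)
    then show ?thesis by (simp add: abs_less_iff)
  qed
  moreover have "composed_digits M D E \<subseteq> {..<N * M}" "composed_digits N E D \<subseteq> {..<N * M}"
    using composed_digits_subset[OF valid_digitsD(4)[OF v1] valid_digitsD(4)[OF v2]]
      composed_digits_subset[OF valid_digitsD(4)[OF v2] valid_digitsD(4)[OF v1]]
    by (simp_all add: mult.commute)
  ultimately show "composed_digits M D E = composed_digits N E D"
    by (intro set_eq_if_digits_below_eq) auto
qed

lemma unit_interval_cdfs_eq_at_fraction:
  assumes "unit_interval_cdf H1" "unit_interval_cdf H2" "0 < n" "j \<le> n"
    and "0 < j \<Longrightarrow> j < n \<Longrightarrow> H1 (real j / real n) = H2 (real j / real n)"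
  shows "H1 (real j / real n) = H2 (real j / real n)"
  using assms unit_interval_cdfD(2)[OF assms(1)] unit_interval_cdfD(2)[OF assms(2)]
    unit_interval_cdfD(3)[OF assms(1)] unit_interval_cdfD(3)[OF assms(2)]
  by (cases "j = 0 \<or> j = n") auto

section \<open>Sample points\<close>

(* The junk value 1/2 keeps every point in (0, 1). *)
definition fraction_point :: "nat \<Rightarrow> nat \<Rightarrow> real" where
  "fraction_point j n = (if 0 < j \<and> j < n then real j / real n else 1 / 2)"

(* Indices i < (K + 1)^2 encode i = (K + 1) n + j and give the fractions j/n with n <= K;
   the next K^3 indices give the grid of step K^-3. *)
definition sample_point :: "nat \<Rightarrow> nat \<Rightarrow> real" where
  "sample_point K i =
    (if i < (K + 1) ^ 2 then fraction_point (i mod (K + 1)) (i div (K + 1))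
     else fraction_point (i - (K + 1) ^ 2) (K ^ 3))"

definition sample_count :: "nat \<Rightarrow> nat" where
  "sample_count K = (K + 1) ^ 2 + K ^ 3"

lemma fraction_point_bounds: "0 < fraction_point j n" "fraction_point j n < 1"
  by (simp_all add: fraction_point_def)

lemma sample_point_in_unit_interval: "sample_point K i \<in> {0<..<1}"
  by (simp add: sample_point_def fraction_point_bounds)

lemma sample_point_fraction:
  assumes "0 < j" "j < n" "n \<le> K"
  shows "(K + 1) * n + j < sample_count K" "sample_point K ((K + 1) * n + j) = real j / real n"
proof -
  have "(K + 1) * n + j < (K + 1) * (n + 1)" using assms by simp
  also have "\<dots> \<le> (K + 1) * (K + 1)" using assms by (intro mult_le_mono2) simp
  also have "\<dots> = (K + 1) ^ 2" by (simp add: power2_eq_square)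
  finally have small: "(K + 1) * n + j < (K + 1) ^ 2" .
  then show "(K + 1) * n + j < sample_count K" by (simp add: sample_count_def)
  have "j < K + 1" using assms by simp
  then have "((K + 1) * n + j) mod (K + 1) = j" "((K + 1) * n + j) div (K + 1) = n"
    by (metis mod_mult_self4 mod_less, metis add_0_right add_eq_0_iff_both_eq_0 div_less
        div_mult_self4 one_neq_zero)
  with small show "sample_point K ((K + 1) * n + j) = real j / real n"
    using assms by (simp add: sample_point_def fraction_point_def)
qed

lemma sample_point_cube_grid:
  assumes "0 < j" "j < K ^ 3"
  shows "(K + 1) ^ 2 + j < sample_count K" "sample_point K ((K + 1) ^ 2 + j) = real j / real K ^ 3"
  using assms by (simp_all add: sample_count_def sample_point_def fraction_point_def)

lemma sample_count_bigo: "(\<lambda>K. real (sample_count K)) \<in> O(\<lambda>K. real K ^ 3)"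
proof (rule bigoI[where c = 5])
  show "\<forall>\<^sub>F K in at_top. norm (real (sample_count K)) \<le> 5 * norm (real K ^ 3)"
  proof (rule eventually_at_top_linorderI[of 1])
    fix K :: nat assume "1 \<le> K"
    then have "(K + 1) ^ 2 \<le> (2 * K) ^ 2" by (intro power_mono) auto
    also have "\<dots> \<le> 4 * K ^ 3" using \<open>1 \<le> K\<close> by (simp add: power_mult_distrib power_increasing)
    finally have "sample_count K \<le> 5 * K ^ 3" by (simp add: sample_count_def)
    then show "norm (real (sample_count K)) \<le> 5 * norm (real K ^ 3)"
      by (metis norm_of_nat of_nat_le_iff of_nat_mult of_nat_numeral of_nat_power)
  qed
qed

lemma cantor_class_eq_if_agree_on_sample_points:
  assumes "F \<in> cantor_class K" "G \<in> cantor_class K"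
    and agree: "\<And>i. i < sample_count K \<Longrightarrow> F (sample_point K i) = G (sample_point K i)"
    and "0 \<le> t"
  shows "F t = G t"
proof -
  obtain N D M E where v1: "valid_digits N D" and v2: "valid_digits M E" and "N \<le> K" "M \<le> K"
    and FG: "F = cantor_cdf N D" "G = cantor_cdf M E"
    using assms(1,2) by (auto simp: cantor_class_def)
  obtain H1 H2 where H1: "cantor_function N D H1" and H2: "cantor_function M E H2"
    using cantor_function_exists[OF v1] cantor_function_exists[OF v2] by metis
  have FH: "F x = H1 x" "G x = H2 x" if "0 \<le> x" for x
    using cantor_cdf_eq_cantor_function[OF v1 H1 that] cantor_cdf_eq_cantor_function[OF v2 H2 that]
      FG
    by simp_all
  have sample: "H1 (sample_point K i) = H2 (sample_point K i)" if "i < sample_count K" for i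
    using agree[OF that] FH sample_point_in_unit_interval[of K i] by simp
  note eq_at_fraction = unit_interval_cdfs_eq_at_fraction[OF
      cantor_functionD(1)[OF H1] cantor_functionD(1)[OF H2]]
  have "H1 = H2"
  proof (rule cantor_functions_eq_if_agree_on_grids[OF v1 v2 H1 H2 \<open>N \<le> K\<close> \<open>M \<le> K\<close>])
    fix n j :: nat assume "0 < n" "n \<le> K" "j \<le> n"
    then show "H1 (real j / real n) = H2 (real j / real n)"
      using eq_at_fraction sample sample_point_fraction by metis
  next
    fix j :: nat assume "j \<le> K ^ 3"
    have "0 < K ^ 3" using valid_digitsD(1)[OF v1] \<open>N \<le> K\<close> by simp
    from this \<open>j \<le> K ^ 3\<close> have "H1 (real j / real (K ^ 3)) = H2 (real j / real (K ^ 3))"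
    proof (rule eq_at_fraction)
      assume "0 < j" "j < K ^ 3"
      then show "H1 (real j / real (K ^ 3)) = H2 (real j / real (K ^ 3))"
        using sample[OF sample_point_cube_grid(1)] sample_point_cube_grid(2) by simp
    qed
    then show "H1 (real j / real K ^ 3) = H2 (real j / real K ^ 3)" by simp
  qed
  then show ?thesis using FH \<open>0 \<le> t\<close> by simp
qed

theorem theorem2p5:
  shows "\<exists>M :: nat \<Rightarrow> nat.
     (\<lambda>K. real (M K)) \<in> O(\<lambda>K. real K ^ 3) \<and>
     (\<forall>K \<ge> 3. M K > 0 \<and>
        (\<exists>x :: nat \<Rightarrow> real. (\<forall>i < M K. x i \<in> {0<..<1}) \<and>
           (\<forall>F \<in> cantor_class K. \<forall>G \<in> cantor_class K.
              (\<forall>i < M K. F (x i) = G (x i)) \<longrightarrow> (\<forall>t \<in> {0..1}. F t = G t))))"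
proof (intro exI[of _ sample_count] conjI allI impI)
  show "(\<lambda>K. real (sample_count K)) \<in> O(\<lambda>K. real K ^ 3)" by (rule sample_count_bigo)
  fix K :: nat
  show "0 < sample_count K" by (simp add: sample_count_def)
  show "\<exists>x. (\<forall>i < sample_count K. x i \<in> {0<..<1}) \<and>
      (\<forall>F \<in> cantor_class K. \<forall>G \<in> cantor_class K.
        (\<forall>i < sample_count K. F (x i) = G (x i)) \<longrightarrow> (\<forall>t \<in> {0..1}. F t = G t))"
    using sample_point_in_unit_interval cantor_class_eq_if_agree_on_sample_points
    by (intro exI[of _ "sample_point K"]) auto
qed

end
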